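(* Let $L$ be a simple Lie algebra over a field $k$ with $|k|\geq4$, generated by its pure extremal elements, whose extremal geometry contains lines. Let $x,y\in E$ with $g(x,y)=1$ and associated $5$-grading $L=\bigoplus_{i=-2}^2L_i$. Let $c,d\in E\cap L_{-1}$ with $[c,d]=x$, put $q=-[y,d]$ (so that $g(c,q)=1$), let $L=\bigoplus_{i=-2}^2L'_i$ be the $5$-grading associated with $(c,q)$, and put $J=L_{-1}\cap L'_{-1}$, $J'=L_{-1}\cap L'_0$. Then $L_{-1}=kc\oplus J\oplus J'\oplus kd$. Moreover $L_{-1}\cap L'_1=kd$.
   Context: A nonzero $a\in L$ is extremal if there is $g_a\colon L\to k$ with $[a,[a,u]]=2g_a(u)a$, $[[a,u],[a,w]]=g_a([u,w])a+g_a(w)[a,u]-g_a(u)[a,w]$, $[a,[u,[a,w]]]=g_a([u,w])a-g_a(w)[a,u]-g_a(u)[a,w]$ for all $u,w$; sandwiches satisfy $[a,[a,u]]=0=[a,[u,[a,w]]]$; pure = non-sandwich; $E$ = set of extremal elements; $g$ = unique symmetric bilinear form with $g(a,u)=g_a(u)$ for $a\in E$. Pure extremal $a,b$, $ka\ne kb$, are collinear if $[a,b]=0$ and $\lambda a+\mu b\in E\cup\{0\}$ for all $\lambda,\mu$; the extremal geometry contains lines iff such a pair exists. For $a,b\in E$ with $g(a,b)=1$ the associated $5$-grading is $M_{-2}=ka$, $M_{-1}=[a,U]$, $M_0=\{l:[a,l]\in ka,[b,l]\in kb\}$, $M_1=[b,U]$, $M_2=kb$ with $U=\{u:g(u,a)=g(u,b)=g(u,[a,b])=0\}$.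 Elements $c,d$ as in the claim exist under these hypotheses. *)

theory Defs
  imports Main
begin

definition vec_space :: "('k::field \<Rightarrow> 'v::ab_group_add \<Rightarrow> 'v) \<Rightarrow> bool" where
  "vec_space sm \<longleftrightarrow>
     (\<forall>a x y. sm a (x + y) = sm a x + sm a y) \<and>
     (\<forall>a b x. sm (a + b) x = sm a x + sm b x) \<and>
     (\<forall>a b x. sm a (sm b x) = sm (a * b) x) \<and>
     (\<forall>x. sm 1 x = x)"

definition lie_algebra :: "('k::field \<Rightarrow> 'v::ab_group_add \<Rightarrow> 'v) \<Rightarrow> ('v \<Rightarrow> 'v \<Rightarrow> 'v) \<Rightarrow> bool" where
  "lie_algebra sm br \<longleftrightarrow> vec_space sm \<and>
     (\<forall>x y z. br (x + y) z = br x z + br y z) \<and>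
     (\<forall>x y z. br x (y + z) = br x y + br x z) \<and>
     (\<forall>a x y. br (sm a x) y = sm a (br x y)) \<and>
     (\<forall>a x y. br x (sm a y) = sm a (br x y)) \<and>
     (\<forall>x. br x x = 0) \<and>
     (\<forall>x y z. br x (br y z) + br y (br z x) + br z (br x y) = 0)"

definition lin_subspace :: "('k::field \<Rightarrow> 'v::ab_group_add \<Rightarrow> 'v) \<Rightarrow> 'v set \<Rightarrow> bool" where
  "lin_subspace sm S \<longleftrightarrow> 0 \<in> S \<and> (\<forall>x\<in>S. \<forall>y\<in>S. x + y \<in> S) \<and> (\<forall>a. \<forall>x\<in>S. sm a x \<in> S)"

definition lie_ideal :: "('k::field \<Rightarrow> 'v::ab_group_add \<Rightarrow> 'v) \<Rightarrow> ('v \<Rightarrow> 'v \<Rightarrow> 'v) \<Rightarrow> 'v set \<Rightarrow> bool" where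
  "lie_ideal sm br I \<longleftrightarrow> lin_subspace sm I \<and> (\<forall>x. \<forall>i\<in>I. br x i \<in> I)"

definition simple_lie_algebra :: "('k::field \<Rightarrow> 'v::ab_group_add \<Rightarrow> 'v) \<Rightarrow> ('v \<Rightarrow> 'v \<Rightarrow> 'v) \<Rightarrow> bool" where
  "simple_lie_algebra sm br \<longleftrightarrow> lie_algebra sm br \<and> (\<exists>u w. br u w \<noteq> 0) \<and>
     (\<forall>I. lie_ideal sm br I \<longrightarrow> I = {0} \<or> I = UNIV)"

inductive_set lie_gen :: "('k::field \<Rightarrow> 'v::ab_group_add \<Rightarrow> 'v) \<Rightarrow> ('v \<Rightarrow> 'v \<Rightarrow> 'v) \<Rightarrow> 'v set \<Rightarrow> 'v set"
  for sm br S where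
  gen: "x \<in> S \<Longrightarrow> x \<in> lie_gen sm br S"
| zero: "0 \<in> lie_gen sm br S"
| add: "x \<in> lie_gen sm br S \<Longrightarrow> y \<in> lie_gen sm br S \<Longrightarrow> x + y \<in> lie_gen sm br S"
| scale: "x \<in> lie_gen sm br S \<Longrightarrow> sm a x \<in> lie_gen sm br S"
| bracket: "x \<in> lie_gen sm br S \<Longrightarrow> y \<in> lie_gen sm br S \<Longrightarrow> br x y \<in> lie_gen sm br S"

definition line_span :: "('k::field \<Rightarrow> 'v::ab_group_add \<Rightarrow> 'v) \<Rightarrow> 'v \<Rightarrow> 'v set" where
  "line_span sm a = range (\<lambda>t. sm t a)"

definition extremal_with :: "('k::field \<Rightarrow> 'v::ab_group_add \<Rightarrow> 'v) \<Rightarrow> ('v \<Rightarrow> 'v \<Rightarrow> 'v) \<Rightarrow> 'v \<Rightarrow> ('v \<Rightarrow> 'k) \<Rightarrow> bool" where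
  "extremal_with sm br a ga \<longleftrightarrow>
     (\<forall>u. br a (br a u) = sm (2 * ga u) a) \<and>
     (\<forall>u w. br (br a u) (br a w) = sm (ga (br u w)) a + sm (ga w) (br a u) - sm (ga u) (br a w)) \<and>
     (\<forall>u w. br a (br u (br a w)) = sm (ga (br u w)) a - sm (ga w) (br a u) - sm (ga u) (br a w))"

definition extremal :: "('k::field \<Rightarrow> 'v::ab_group_add \<Rightarrow> 'v) \<Rightarrow> ('v \<Rightarrow> 'v \<Rightarrow> 'v) \<Rightarrow> 'v \<Rightarrow> bool" where
  "extremal sm br a \<longleftrightarrow> a \<noteq> 0 \<and> (\<exists>ga. extremal_with sm br a ga)"

definition sandwich :: "('k::field \<Rightarrow> 'v::ab_group_add \<Rightarrow> 'v) \<Rightarrow> ('v \<Rightarrow> 'v \<Rightarrow> 'v) \<Rightarrow> 'v \<Rightarrow> bool" where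
  "sandwich sm br a \<longleftrightarrow> extremal sm br a \<and> (\<forall>u. br a (br a u) = 0) \<and> (\<forall>u w. br a (br u (br a w)) = 0)"

definition pure_extremal :: "('k::field \<Rightarrow> 'v::ab_group_add \<Rightarrow> 'v) \<Rightarrow> ('v \<Rightarrow> 'v \<Rightarrow> 'v) \<Rightarrow> 'v \<Rightarrow> bool" where
  "pure_extremal sm br a \<longleftrightarrow> extremal sm br a \<and> \<not> sandwich sm br a"

definition extremal_set :: "('k::field \<Rightarrow> 'v::ab_group_add \<Rightarrow> 'v) \<Rightarrow> ('v \<Rightarrow> 'v \<Rightarrow> 'v) \<Rightarrow> 'v set" where
  "extremal_set sm br = {a. extremal sm br a}"

definition extremal_form :: "('k::field \<Rightarrow> 'v::ab_group_add \<Rightarrow> 'v) \<Rightarrow> ('v \<Rightarrow> 'v \<Rightarrow> 'v) \<Rightarrow> ('v \<Rightarrow> 'v \<Rightarrow> 'k) \<Rightarrow> bool" where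
  "extremal_form sm br g \<longleftrightarrow>
     (\<forall>x y z. g (x + y) z = g x z + g y z) \<and>
     (\<forall>a x y. g (sm a x) y = a * g x y) \<and>
     (\<forall>x y. g x y = g y x) \<and>
     (\<forall>a \<in> extremal_set sm br. extremal_with sm br a (g a))"

definition collinear :: "('k::field \<Rightarrow> 'v::ab_group_add \<Rightarrow> 'v) \<Rightarrow> ('v \<Rightarrow> 'v \<Rightarrow> 'v) \<Rightarrow> 'v \<Rightarrow> 'v \<Rightarrow> bool" where
  "collinear sm br a b \<longleftrightarrow> pure_extremal sm br a \<and> pure_extremal sm br b \<and>
     line_span sm a \<noteq> line_span sm b \<and> br a b = 0 \<and>
     (\<forall>s t. sm s a + sm t b \<in> extremal_set sm br \<union> {0})"

definition has_lines :: "('k::field \<Rightarrow> 'v::ab_group_add \<Rightarrow> 'v) \<Rightarrow> ('v \<Rightarrow> 'v \<Rightarrow> 'v) \<Rightarrow> bool" where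
  "has_lines sm br \<longleftrightarrow> (\<exists>a b. collinear sm br a b)"

text \<open>The 5-grading associated with (a,b); indices outside -2..2 give {0}.\<close>
definition grading_U :: "('v \<Rightarrow> 'v \<Rightarrow> 'v) \<Rightarrow> ('v \<Rightarrow> 'v \<Rightarrow> 'k::field) \<Rightarrow> 'v \<Rightarrow> 'v \<Rightarrow> 'v set" where
  "grading_U br g a b = {u. g u a = 0 \<and> g u b = 0 \<and> g u (br a b) = 0}"

definition grading :: "('k::field \<Rightarrow> 'v::ab_group_add \<Rightarrow> 'v) \<Rightarrow> ('v \<Rightarrow> 'v \<Rightarrow> 'v) \<Rightarrow> ('v \<Rightarrow> 'v \<Rightarrow> 'k)
    \<Rightarrow> 'v \<Rightarrow> 'v \<Rightarrow> int \<Rightarrow> 'v set" where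
  "grading sm br g a b i =
     (if i = -2 then line_span sm a
      else if i = -1 then br a ` grading_U br g a b
      else if i = 0 then {l. br a l \<in> line_span sm a \<and> br b l \<in> line_span sm b}
      else if i = 1 then br b ` grading_U br g a b
      else if i = 2 then line_span sm b
      else {0})"

definition direct_sum4 :: "'v::ab_group_add set \<Rightarrow> 'v set \<Rightarrow> 'v set \<Rightarrow> 'v set \<Rightarrow> 'v set \<Rightarrow> bool" where
  "direct_sum4 V A B C D \<longleftrightarrow>
     V = {a + b + c + d | a b c d. a \<in> A \<and> b \<in> B \<and> c \<in> C \<and> d \<in> D} \<and>
     (\<forall>a\<in>A. \<forall>b\<in>B. \<forall>c\<in>C. \<forall>d\<in>D. \<forall>a'\<in>A. \<forall>b'\<in>B. \<forall>c'\<in>C. \<forall>d'\<in>D.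
        a + b + c + d = a' + b' + c' + d' \<longrightarrow> a = a' \<and> b = b' \<and> c = c' \<and> d = d')"

end

theory Submission
  imports Defs
begin

(*
  For extremal a, the map exp (t ad a) = 1 + t ad a + t\<^sup>2 g(a,-) a is an automorphism of L.
  It maps pure extremal elements to pure extremal ones, and since the functional g\<^sub>u of a
  non-sandwich u is unique, g(exp (t ad a) u, exp (t ad a) w) = g(u,w). This is a polynomial
  identity of degree 2 in t, so as soon as |k| \<ge> 3 its linear coefficient vanishes: ad a is
  skew for g. Since L is spanned by pure extremal elements, g is invariant,
  g([a,b],w) = g(a,[b,w]), and then L\<^sub>-\<^sub>1 of a pair (a,b) with g(a,b) = 1 is exactly the set
  of l with [a,[b,l]] = -l.

  In the situation of the theorem, q = exp(-ad x) exp(-ad y) d is extremal with g(c,q) = 1.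
  For l \<in> L\<^sub>-\<^sub>1 write [c,l] = t x and l\<^sub>0 = l - t d - s c with s = g(l - t d, q); then
  j = -[c,[q,l\<^sub>0]] lies in L\<^sub>-\<^sub>1 \<inter> L'\<^sub>-\<^sub>1 and l\<^sub>0 - j in L\<^sub>-\<^sub>1 \<inter> L'\<^sub>0, which decomposes
  l = s c + j + (l\<^sub>0 - j) + t d. The decomposition is unique: applying ad c and pairing with y
  kills the d-part, pairing with q kills the c-part, and L'\<^sub>-\<^sub>1 \<inter> L'\<^sub>0 = 0. Finally
  l \<in> L\<^sub>-\<^sub>1 \<inter> L'\<^sub>1 gives l = -[q,[c,l]] \<in> k [q,x] = k d.
*)

locale lie_alg =
  fixes sm :: "'k::field \<Rightarrow> 'v::ab_group_add \<Rightarrow> 'v" and br :: "'v \<Rightarrow> 'v \<Rightarrow> 'v"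
  assumes lie: "lie_algebra sm br"
begin

lemma sm_add_right [simp]: "sm a (x + y) = sm a x + sm a y"
  and sm_add_left [simp]: "sm (a + b) x = sm a x + sm b x"
  and sm_sm [simp]: "sm a (sm b x) = sm (a * b) x"
  and sm_one [simp]: "sm 1 x = x"
  using lie unfolding lie_algebra_def vec_space_def by auto

lemma sm_zero_left [simp]: "sm 0 x = 0"
  using sm_add_left[of 0 0 x] by simp

lemma sm_zero_right [simp]: "sm a 0 = 0"
  using sm_add_right[of a 0 0] by simp

lemma sm_neg_left [simp]: "sm (- a) x = - sm a x"
  using sm_add_left[of "- a" a x] by (simp add: eq_neg_iff_add_eq_0)

lemma sm_neg_right [simp]: "sm a (- x) = - sm a x"
  using sm_add_right[of a "- x" x] by (simp add: eq_neg_iff_add_eq_0)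

lemma sm_diff_left [simp]: "sm (a - b) x = sm a x - sm b x"
  using sm_add_left[of a "- b" x] by simp

lemma sm_diff_right [simp]: "sm a (x - y) = sm a x - sm a y"
  using sm_add_right[of a x "- y"] by simp

lemma sm_eq_zero_iff: "sm t v = 0 \<longleftrightarrow> t = 0 \<or> v = 0"
  by (metis sm_one sm_sm sm_zero_left sm_zero_right field_class.field_inverse)

lemma br_add_left [simp]: "br (x + y) z = br x z + br y z"
  and br_add_right [simp]: "br x (y + z) = br x y + br x z"
  and br_sm_left [simp]: "br (sm a x) y = sm a (br x y)"
  and br_sm_right [simp]: "br x (sm a y) = sm a (br x y)"
  and br_self [simp]: "br x x = 0"
  and jacobi: "br x (br y z) + br y (br z x) + br z (br x y) = 0"
  using lie unfolding lie_algebra_def by blast+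

lemma br_zero_left [simp]: "br 0 y = 0"
  using br_sm_left[of 0 0 y] by simp

lemma br_zero_right [simp]: "br y 0 = 0"
  using br_sm_right[of y 0 0] by simp

lemma br_neg_left [simp]: "br (- x) y = - br x y"
  by (metis br_sm_left sm_neg_left sm_one)

lemma br_neg_right [simp]: "br y (- x) = - br y x"
  by (metis br_sm_right sm_neg_left sm_one)

lemma br_diff_left [simp]: "br (x - y) z = br x z - br y z"
  using br_add_left[of x "- y" z] by simp

lemma br_diff_right [simp]: "br z (x - y) = br z x - br z y"
  using br_add_right[of z x "- y"] by simp

lemma br_anticomm: "br x y = - br y x"
proof -
  have "br x y + br y x = 0"
    using br_self[of "x + y"] unfolding br_add_left br_add_right by (simp add: add.commute)
  then show ?thesis by (simp add: eq_neg_iff_add_eq_0)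
qed

lemma jacobi_leibniz: "br a (br b c) = br (br a b) c + br b (br a c)"
  using jacobi[of a b c] br_anticomm[of c "br a b"] br_anticomm[of c a]
  by (simp add: algebra_simps eq_neg_iff_add_eq_0)

lemma mem_line_span_iff: "z \<in> line_span sm a \<longleftrightarrow> (\<exists>t. z = sm t a)"
  unfolding line_span_def by auto

lemma line_span_ideal:
  assumes "\<forall>w. br a w \<in> line_span sm a"
  shows "lie_ideal sm br (line_span sm a)"
  unfolding lie_ideal_def lin_subspace_def
proof (intro conjI ballI allI)
  show "0 \<in> line_span sm a"
    unfolding mem_line_span_iff by (metis sm_zero_left)
  show "u + v \<in> line_span sm a" if "u \<in> line_span sm a" "v \<in> line_span sm a" for u v
    using that unfolding mem_line_span_iff by (metis sm_add_left)
  show "sm r u \<in> line_span sm a" if "u \<in> line_span sm a" for r u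
    using that unfolding mem_line_span_iff by (metis sm_sm)
  fix z u assume "u \<in> line_span sm a"
  then obtain s where "u = sm s a" unfolding mem_line_span_iff by blast
  moreover obtain t where "br a z = sm t a" using assms unfolding mem_line_span_iff by blast
  ultimately have "br z u = sm (- (s * t)) a" by (subst br_anticomm) simp
  then show "br z u \<in> line_span sm a" unfolding mem_line_span_iff by blast
qed

definition lie_hom :: "('v \<Rightarrow> 'v) \<Rightarrow> bool" where
  "lie_hom \<phi> \<longleftrightarrow> (\<forall>x y. \<phi> (x + y) = \<phi> x + \<phi> y) \<and> (\<forall>t x. \<phi> (sm t x) = sm t (\<phi> x))
     \<and> (\<forall>x y. \<phi> (br x y) = br (\<phi> x) (\<phi> y))"

lemma lie_hom_add: "lie_hom \<phi> \<Longrightarrow> \<phi> (x + y) = \<phi> x + \<phi> y"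
  and lie_hom_sm: "lie_hom \<phi> \<Longrightarrow> \<phi> (sm t x) = sm t (\<phi> x)"
  and lie_hom_br: "lie_hom \<phi> \<Longrightarrow> \<phi> (br x y) = br (\<phi> x) (\<phi> y)"
  unfolding lie_hom_def by blast+

lemma lie_hom_zero: "lie_hom \<phi> \<Longrightarrow> \<phi> 0 = 0"
  using lie_hom_sm[of \<phi> 0 0] by simp

lemma lie_hom_diff: "lie_hom \<phi> \<Longrightarrow> \<phi> (x - y) = \<phi> x - \<phi> y"
  using lie_hom_add[of \<phi> x "- y"] lie_hom_sm[of \<phi> "- 1" y] by simp

lemma extremal_with_transport:
  assumes \<phi>: "lie_hom \<phi>" and \<psi>: "lie_hom \<psi>" and inv: "\<And>x. \<phi> (\<psi> x) = x"
    and b: "extremal_with sm br b f"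
  shows "extremal_with sm br (\<phi> b) (\<lambda>z. f (\<psi> z))"
  unfolding extremal_with_def
proof (intro conjI allI)
  note hom = lie_hom_add[OF \<phi>] lie_hom_sm[OF \<phi>] lie_hom_br[OF \<phi>] lie_hom_diff[OF \<phi>]
    lie_hom_br[OF \<psi>] inv
  fix u w
  have "\<phi> (br b (br b (\<psi> u))) = \<phi> (sm (2 * f (\<psi> u)) b)"
    using b unfolding extremal_with_def by simp
  then show "br (\<phi> b) (br (\<phi> b) u) = sm (2 * f (\<psi> u)) (\<phi> b)"
    by (simp add: hom)
  have "\<phi> (br (br b (\<psi> u)) (br b (\<psi> w))) = \<phi> (sm (f (br (\<psi> u) (\<psi> w))) b
      + sm (f (\<psi> w)) (br b (\<psi> u)) - sm (f (\<psi> u)) (br b (\<psi> w)))"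
    using b unfolding extremal_with_def by simp
  then show "br (br (\<phi> b) u) (br (\<phi> b) w) = sm (f (\<psi> (br u w))) (\<phi> b)
      + sm (f (\<psi> w)) (br (\<phi> b) u) - sm (f (\<psi> u)) (br (\<phi> b) w)"
    by (simp add: hom)
  have "\<phi> (br b (br (\<psi> u) (br b (\<psi> w)))) = \<phi> (sm (f (br (\<psi> u) (\<psi> w))) b
      - sm (f (\<psi> w)) (br b (\<psi> u)) - sm (f (\<psi> u)) (br b (\<psi> w)))"
    using b unfolding extremal_with_def by simp
  then show "br (\<phi> b) (br u (br (\<phi> b) w)) = sm (f (\<psi> (br u w))) (\<phi> b)
      - sm (f (\<psi> w)) (br (\<phi> b) u) - sm (f (\<psi> u)) (br (\<phi> b) w)"
    by (simp add: hom)
qed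

lemma extremal_transport:
  assumes \<phi>: "lie_hom \<phi>" and \<psi>: "lie_hom \<psi>"
    and inv1: "\<And>x. \<phi> (\<psi> x) = x" and inv2: "\<And>x. \<psi> (\<phi> x) = x"
    and b: "extremal sm br b"
  shows "extremal sm br (\<phi> b)"
proof -
  obtain f where "extremal_with sm br b f" and "b \<noteq> 0"
    using b unfolding extremal_def by blast
  moreover have "\<phi> b \<noteq> 0" if "b \<noteq> 0"
    using that inv2[of b] lie_hom_zero[OF \<psi>] by metis
  ultimately show ?thesis
    using extremal_with_transport[OF \<phi> \<psi> inv1] unfolding extremal_def by blast
qed

lemma sandwich_transport:
  assumes \<phi>: "lie_hom \<phi>" and \<psi>: "lie_hom \<psi>"
    and inv1: "\<And>x. \<phi> (\<psi> x) = x" and inv2: "\<And>x. \<psi> (\<phi> x) = x"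
    and b: "sandwich sm br b"
  shows "sandwich sm br (\<phi> b)"
  unfolding sandwich_def
proof (intro conjI allI)
  show "extremal sm br (\<phi> b)"
    using b extremal_transport[OF \<phi> \<psi> inv1 inv2] unfolding sandwich_def by blast
  fix u w
  have "\<phi> (br b (br b (\<psi> u))) = 0" "\<phi> (br b (br (\<psi> u) (br b (\<psi> w)))) = 0"
    using b lie_hom_zero[OF \<phi>] unfolding sandwich_def by simp_all
  then show "br (\<phi> b) (br (\<phi> b) u) = 0" "br (\<phi> b) (br u (br (\<phi> b) w)) = 0"
    by (simp_all add: lie_hom_br[OF \<phi>] inv1)
qed

lemma sandwich_if_char_2:
  assumes f: "extremal_with sm br u f" and "u \<noteq> 0" and two: "(2::'k) = 0"
    and abelian: "\<And>v z. br (br u v) (br u z) = 0"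
  shows "sandwich sm br u"
  unfolding sandwich_def extremal_def
proof (intro conjI allI exI)
  show "u \<noteq> 0" "extremal_with sm br u f" by fact+
  have f2: "\<And>z. f z + f z = 0" using two by (metis mult_2 mult_zero_left)
  show "br u (br u z) = 0" for z
    using f two unfolding extremal_with_def by simp
  have br_f: "br (br u v) (br u z) = sm (f (br v z)) u + sm (f z) (br u v) - sm (f v) (br u z)"
    and ad_f: "br u (br v (br u z)) = sm (f (br v z)) u - sm (f z) (br u v) - sm (f v) (br u z)"
    for v z using f unfolding extremal_with_def by blast+
  have "br u (br v (br u z)) = br (br u v) (br u z) - sm (f z + f z) (br u v)" for v z
    unfolding ad_f br_f sm_add_left by (simp add: algebra_simps)
  then show "br u (br v (br u z)) = 0" for v z
    using abelian f2 by simp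
qed

lemma extremal_functional_unique:
  assumes f1: "extremal_with sm br u f1" and f2: "extremal_with sm br u f2"
    and not_sandwich: "\<not> sandwich sm br u" and "u \<noteq> 0"
  shows "f1 = f2"
proof (rule ext, rule ccontr)
  fix w assume ne: "f1 w \<noteq> f2 w"
  have sq1: "br u (br u z) = sm (2 * f1 z) u" and sq2: "br u (br u z) = sm (2 * f2 z) u" for z
    using f1 f2 unfolding extremal_with_def by blast+
  have br1: "br (br u v) (br u z) = sm (f1 (br v z)) u + sm (f1 z) (br u v) - sm (f1 v) (br u z)"
    and br2: "br (br u v) (br u z) = sm (f2 (br v z)) u + sm (f2 z) (br u v) - sm (f2 v) (br u z)"
    for v z using f1 f2 unfolding extremal_with_def by blast+
  have "sm (2 * f1 w - 2 * f2 w) u = 0"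
    using sq1[of w] sq2[of w] by simp
  then have "2 * (f1 w - f2 w) = 0"
    using \<open>u \<noteq> 0\<close> by (metis sm_eq_zero_iff right_diff_distrib)
  then have two: "(2::'k) = 0" using ne by simp
  define e where "e = f1 w - f2 w"
  define \<delta> where "\<delta> z = (f1 z - f2 z) / e" for z
  define p where "p = br u w"
  have "e \<noteq> 0" using ne unfolding e_def by simp
  \<comment> \<open>Comparing the two expressions for \<open>[[u,w],[u,z]]\<close> puts every \<open>[u,z]\<close> into \<open>ku + kp\<close>.\<close>
  have ad_u: "br u z = sm (\<delta> (br w z)) u + sm (\<delta> z) p" for z
  proof -
    have e_ad: "sm e (br u z) = sm (f1 (br w z) - f2 (br w z)) u + sm (f1 z - f2 z) p"
      using br1[of w z] br2[of w z] unfolding p_def e_def by (simp add: algebra_simps)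
    have "br u z = sm (inverse e) (sm e (br u z))" using \<open>e \<noteq> 0\<close> by simp
    also have "\<dots> = sm (inverse e) (sm (f1 (br w z) - f2 (br w z)) u + sm (f1 z - f2 z) p)"
      by (simp only: e_ad)
    also have "\<dots> = sm (\<delta> (br w z)) u + sm (\<delta> z) p"
      unfolding \<delta>_def by (simp only: sm_add_right sm_sm divide_inverse mult.commute)
    finally show ?thesis .
  qed
  have "br u p = 0" unfolding p_def using sq1[of w] two by simp
  then have "br (br u v) (br u z) = 0" for v z
    by (simp add: ad_u[of v] ad_u[of z] br_anticomm[of p u])
  then have "sandwich sm br u" using sandwich_if_char_2 f1 \<open>u \<noteq> 0\<close> two by blast
  with not_sandwich show False by blast
qed

end

section \<open>Extremal elements and their exponentials\<close>

locale simple_extremal =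
  fixes sm :: "'k::field \<Rightarrow> 'v::ab_group_add \<Rightarrow> 'v" and br :: "'v \<Rightarrow> 'v \<Rightarrow> 'v"
    and g :: "'v \<Rightarrow> 'v \<Rightarrow> 'k"
  assumes simple: "simple_lie_algebra sm br"
    and form: "extremal_form sm br g"
begin

sublocale lie_alg sm br
  using simple by unfold_locales (simp add: simple_lie_algebra_def)

abbreviation E :: "'v set" where
  "E \<equiv> extremal_set sm br"

lemma g_add_left [simp]: "g (x + y) z = g x z + g y z"
  and g_sm_left [simp]: "g (sm a x) y = a * g x y"
  and g_sym: "g x y = g y x"
  using form unfolding extremal_form_def by blast+

lemma g_add_right [simp]: "g z (x + y) = g z x + g z y"
  by (metis g_sym g_add_left)

lemma g_sm_right [simp]: "g y (sm a x) = a * g y x"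
  by (metis g_sym g_sm_left)

lemma g_zero_left [simp]: "g 0 y = 0"
  using g_sm_left[of 0 0 y] by simp

lemma g_zero_right [simp]: "g y 0 = 0"
  using g_sm_right[of y 0 0] by simp

lemma g_neg_left [simp]: "g (- x) y = - g x y"
  using g_sm_left[of "- 1" x y] by simp

lemma g_neg_right [simp]: "g y (- x) = - g y x"
  using g_sm_right[of y "- 1" x] by simp

lemma g_diff_left [simp]: "g (x - y) z = g x z - g y z"
  using g_add_left[of x "- y" z] by simp

lemma g_diff_right [simp]: "g z (x - y) = g z x - g z y"
  using g_add_right[of z x "- y"] by simp

lemma extremal_with_g: "a \<in> E \<Longrightarrow> extremal_with sm br a (g a)"
  using form unfolding extremal_form_def by blast

lemma extremal_nonzero: "a \<in> E \<Longrightarrow> a \<noteq> 0"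
  unfolding extremal_set_def extremal_def by blast

lemma extremal_ad_sq: "a \<in> E \<Longrightarrow> br a (br a u) = sm (2 * g a u) a"
  and extremal_br_ad: "a \<in> E \<Longrightarrow>
    br (br a u) (br a w) = sm (g a (br u w)) a + sm (g a w) (br a u) - sm (g a u) (br a w)"
  and extremal_ad_ad: "a \<in> E \<Longrightarrow>
    br a (br u (br a w)) = sm (g a (br u w)) a - sm (g a w) (br a u) - sm (g a u) (br a w)"
  using extremal_with_g unfolding extremal_with_def by blast+

lemma extremal_ad_sq_add: "a \<in> E \<Longrightarrow> br a (br a u) = sm (g a u) a + sm (g a u) a"
  using extremal_ad_sq[of a u] by (simp only: mult_2 sm_add_left)

lemma
  assumes a: "a \<in> E"
  shows g_extremal_self: "g a a = 0"
    and g_extremal_ad: "g a (br a w) = 0"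
proof -
  have key: "sm (g a (br a v)) a = sm (g a a) (br a v)" for v
    using extremal_ad_ad[OF a, of a v] extremal_ad_sq[OF a, of v] by simp
  show ga: "g a a = 0"
  proof (rule ccontr)
    assume ne: "g a a \<noteq> 0"
    \<comment> \<open>then \<open>ka\<close> would be an ideal\<close>
    have "br a w \<in> line_span sm a" for w
    proof -
      have "br a w = sm (inverse (g a a)) (sm (g a a) (br a w))" using ne by simp
      also have "\<dots> = sm (inverse (g a a) * g a (br a w)) a" by (simp flip: key)
      finally show ?thesis unfolding mem_line_span_iff by blast
    qed
    then have "line_span sm a = {0} \<or> line_span sm a = UNIV"
      using line_span_ideal simple unfolding simple_lie_algebra_def by blast
    moreover have "a \<in> line_span sm a" unfolding mem_line_span_iff by (metis sm_one)
    moreover obtain u w where uw: "br u w \<noteq> 0" using simple unfolding simple_lie_algebra_def by blast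
    ultimately have "u \<in> line_span sm a" "w \<in> line_span sm a"
      using extremal_nonzero[OF a] by auto
    then have "br u w = 0" unfolding mem_line_span_iff by auto
    with uw show False by simp
  qed
  have "sm (g a (br a w)) a = 0" using key[of w] ga by simp
  then show "g a (br a w) = 0"
    using extremal_nonzero[OF a] by (simp add: sm_eq_zero_iff)
qed

\<comment> \<open>The exponential \<open>exp (t ad a)\<close>: the series stops since \<open>(ad a)\<^sup>2 u = 2 g(a,u) a\<close> and \<open>(ad a)\<^sup>3 = 0\<close>.\<close>
definition extremal_exp :: "'k \<Rightarrow> 'v \<Rightarrow> 'v \<Rightarrow> 'v" where
  "extremal_exp t a u = u + sm t (br a u) + sm (t * t * g a u) a"

lemma extremal_exp_br:
  assumes a: "a \<in> E"
  shows "extremal_exp t a (br u w) = br (extremal_exp t a u) (extremal_exp t a w)"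
proof -
  define A where "A = br a u"
  define B where "B = br a w"
  have expand: "br (extremal_exp t a u) (extremal_exp t a w) = br u w + sm t (br u B)
      + sm (t * t * g a w) (br u a) + sm t (br A w) + sm (t * t) (br A B)
      + sm (t * (t * t * g a w)) (br A a) + sm (t * t * g a u) (br a w)
      + sm (t * t * g a u * t) (br a B)"
    unfolding extremal_exp_def A_def B_def by (simp add: algebra_simps)
  have AB: "br A B = sm (g a (br u w)) a + sm (g a w) A - sm (g a u) B"
    unfolding A_def B_def by (rule extremal_br_ad[OF a])
  have Aa: "br A a = - sm (2 * g a u) a"
    unfolding A_def by (subst br_anticomm) (simp add: extremal_ad_sq[OF a])
  have aB: "br a B = sm (2 * g a w) a"
    unfolding B_def by (simp add: extremal_ad_sq[OF a])
  have ua: "br u a = - A"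
    unfolding A_def by (rule br_anticomm)
  have "br a (br u w) = br A w + br u B"
    unfolding A_def B_def by (rule jacobi_leibniz)
  then show ?thesis
    unfolding expand AB Aa aB ua by (simp add: extremal_exp_def algebra_simps B_def)
qed

lemma extremal_exp_lie_hom: "a \<in> E \<Longrightarrow> lie_hom (extremal_exp t a)"
  unfolding lie_hom_def
  by (simp add: extremal_exp_br) (simp add: extremal_exp_def algebra_simps)

lemma extremal_exp_inverse:
  assumes a: "a \<in> E"
  shows "extremal_exp (- t) a (extremal_exp t a u) = u"
proof -
  have "br a (extremal_exp t a u) = br a u + sm (t * g a u) a + sm (t * g a u) a"
    unfolding extremal_exp_def by (simp add: extremal_ad_sq_add[OF a] algebra_simps)
  moreover have "g a (extremal_exp t a u) = g a u"
    unfolding extremal_exp_def by (simp add: g_extremal_self[OF a] g_extremal_ad[OF a])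
  ultimately show ?thesis
    unfolding extremal_exp_def[of "- t" a] by (simp add: extremal_exp_def algebra_simps)
qed

lemma extremal_exp_extremal:
  assumes a: "a \<in> E" and b: "b \<in> E"
  shows "extremal_exp t a b \<in> E"
  using extremal_transport[OF extremal_exp_lie_hom[OF a] extremal_exp_lie_hom[OF a]
      extremal_exp_inverse[OF a, of "- t", simplified] extremal_exp_inverse[OF a]] b
  unfolding extremal_set_def by blast

lemma extremal_exp_pure:
  assumes a: "a \<in> E" and u: "pure_extremal sm br u"
  shows "pure_extremal sm br (extremal_exp t a u)"
proof -
  have "\<not> sandwich sm br u" using u unfolding pure_extremal_def by blast
  then have "\<not> sandwich sm br (extremal_exp t a u)"
    using sandwich_transport[OF extremal_exp_lie_hom[OF a] extremal_exp_lie_hom[OF a]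
        extremal_exp_inverse[OF a] extremal_exp_inverse[OF a, of "- t", simplified]]
    by (metis extremal_exp_inverse[OF a])
  moreover have "extremal_exp t a u \<in> E"
    using u extremal_exp_extremal[OF a] unfolding pure_extremal_def extremal_set_def by blast
  ultimately show ?thesis unfolding pure_extremal_def extremal_set_def by blast
qed

end

section \<open>Invariance of the extremal form\<close>

locale extremal_generated = simple_extremal sm br g
  for sm :: "'k::field \<Rightarrow> 'v::ab_group_add \<Rightarrow> 'v" and br g +
  assumes generated: "lie_gen sm br {a. pure_extremal sm br a} = UNIV"
    and scalar_not_0_1: "\<exists>s::'k. s \<noteq> 0 \<and> s \<noteq> 1"
begin

lemma pure_extremal_in_E: "pure_extremal sm br a \<Longrightarrow> a \<in> E"
  unfolding pure_extremal_def extremal_set_def by blast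

lemma g_extremal_exp_pure:
  assumes a: "a \<in> E" and u: "pure_extremal sm br u"
  shows "g (extremal_exp t a u) (extremal_exp t a w) = g u w"
proof -
  let ?u' = "extremal_exp t a u"
  have "extremal_with sm br ?u' (g ?u')"
    using extremal_with_g extremal_exp_extremal[OF a pure_extremal_in_E[OF u]] .
  then have "extremal_with sm br (extremal_exp (- t) a ?u') (\<lambda>z. g ?u' (extremal_exp t a z))"
    using extremal_with_transport extremal_exp_lie_hom[OF a] extremal_exp_inverse[OF a] by blast
  then have "extremal_with sm br u (\<lambda>z. g ?u' (extremal_exp t a z))"
    by (simp only: extremal_exp_inverse[OF a])
  moreover have "extremal_with sm br u (g u)" "\<not> sandwich sm br u" "u \<noteq> 0"
    using u extremal_with_g unfolding pure_extremal_def extremal_set_def extremal_def by blast+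
  ultimately show ?thesis
    using extremal_functional_unique by metis
qed

lemma g_ad_skew_pure:
  assumes a: "a \<in> E" and u: "pure_extremal sm br u"
  shows "g (br a u) w + g u (br a w) = 0"
proof -
  define c1 where "c1 = g (br a u) w + g u (br a w)"
  define c2 where "c2 = g (br a u) (br a w) + g a u * g a w + g a w * g u a"
  \<comment> \<open>\<open>g(exp(t ad a) u, exp(t ad a) w) = g(u,w) + t c1 + t\<^sup>2 c2\<close> is constant in \<open>t\<close>\<close>
  have "g (extremal_exp t a u) (extremal_exp t a w) = g u w + t * c1 + t * t * c2" for t
    using g_extremal_ad[OF a, of u] unfolding extremal_exp_def c1_def c2_def
    by (simp add: algebra_simps g_extremal_self[OF a] g_extremal_ad[OF a] g_sym[of "br a u" a])
  then have poly: "t * c1 + t * t * c2 = 0" for t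
    using g_extremal_exp_pure[OF a u] by (metis add_cancel_left_right add.assoc)
  obtain s :: 'k where s: "s \<noteq> 0" "s \<noteq> 1" using scalar_not_0_1 by blast
  have "c2 = - c1" using poly[of 1] by (simp add: eq_neg_iff_add_eq_0 add.commute)
  then have "s * (1 - s) * c1 = 0" using poly[of s] by (simp add: algebra_simps)
  then show ?thesis using s unfolding c1_def by simp
qed

inductive_set pure_span :: "'v set" where
  pure: "pure_extremal sm br a \<Longrightarrow> a \<in> pure_span"
| zero: "0 \<in> pure_span"
| add: "x \<in> pure_span \<Longrightarrow> y \<in> pure_span \<Longrightarrow> x + y \<in> pure_span"
| scale: "x \<in> pure_span \<Longrightarrow> sm t x \<in> pure_span"

lemma pure_span_diff: "x \<in> pure_span \<Longrightarrow> y \<in> pure_span \<Longrightarrow> x - y \<in> pure_span"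
  using pure_span.add[of x "sm (- 1) y"] pure_span.scale[of y "- 1"] by simp

lemma pure_span_br:
  assumes "x \<in> pure_span" "y \<in> pure_span"
  shows "br x y \<in> pure_span"
  using assms
proof (induction arbitrary: y rule: pure_span.induct)
  case (pure a)
  have a: "pure_extremal sm br a" by fact
  from pure.prems show ?case
  proof (induction rule: pure_span.induct)
    case (pure b)
    \<comment> \<open>\<open>[a,b] = exp(ad a) b - b - g(a,b) a\<close>, a combination of pure extremal elements\<close>
    have "br a b = extremal_exp 1 a b - b - sm (g a b) a"
      unfolding extremal_exp_def by simp
    moreover have "extremal_exp 1 a b \<in> pure_span"
      by (rule pure_span.pure[OF extremal_exp_pure[OF pure_extremal_in_E[OF a] pure.hyps]])
    ultimately show ?case
      using pure_span.pure pure_span.scale pure_span_diff a pure.hyps by metis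
  qed (simp_all add: pure_span.zero pure_span.add pure_span.scale)
qed (simp_all add: pure_span.zero pure_span.add pure_span.scale)

lemma pure_span_UNIV: "pure_span = UNIV"
proof -
  have "z \<in> pure_span" if "z \<in> lie_gen sm br {a. pure_extremal sm br a}" for z
    using that
    by induction (simp_all add: pure_span.pure pure_span.zero pure_span.add pure_span.scale pure_span_br)
  then show ?thesis using generated by blast
qed

lemma pure_extremal_linear_induct [case_names pure zero add scale]:
  assumes "\<And>a. pure_extremal sm br a \<Longrightarrow> P a" "P 0"
    "\<And>x y. P x \<Longrightarrow> P y \<Longrightarrow> P (x + y)" "\<And>t x. P x \<Longrightarrow> P (sm t x)"
  shows "P z"
proof -
  have "z \<in> pure_span" by (simp add: pure_span_UNIV)
  then show ?thesis by induction (use assms in blast)+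
qed

lemma g_ad_skew: "g (br b v) w + g v (br b w) = 0"
proof (induction b arbitrary: v w rule: pure_extremal_linear_induct)
  case (pure a)
  have a: "a \<in> E" using pure_extremal_in_E[OF pure] .
  show ?case
  proof (induction v arbitrary: w rule: pure_extremal_linear_induct)
    case (pure u)
    show ?case using g_ad_skew_pure[OF a pure] .
  next
    case (scale t x)
    then show ?case by (simp flip: distrib_left)
  qed (simp_all add: algebra_simps)
next
  case (scale t x)
  then show ?case by (simp flip: distrib_left)
qed (simp_all add: algebra_simps)

lemma g_invariant: "g (br a b) w = g a (br b w)"
  using g_ad_skew[of b a w] br_anticomm[of b a] by (simp add: eq_neg_iff_add_eq_0 add.commute)

section \<open>The 5-grading of an extremal pair\<close>

lemma
  assumes a: "a \<in> E" and ab: "g a b = 1" and l: "l \<in> grading sm br g a b (-1)"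
  shows grading_minus1_ad_ad: "br a (br b l) = - l"
    and grading_minus1_ad: "br a l = 0"
    and g_grading_minus1_left: "g l a = 0"
    and g_grading_minus1_right: "g l b = 0"
proof -
  obtain u where lu: "l = br a u" and u: "g u a = 0" "g u b = 0" "g u (br a b) = 0"
    using l unfolding grading_def grading_U_def by auto
  have gabu: "g a (br b u) = 0"
    using u(3) g_invariant[of a b u] g_sym[of u "br a b"] by simp
  then show "br a (br b l) = - l"
    unfolding lu using extremal_ad_ad[OF a, of b u] u(1) ab by (simp add: g_sym)
  show "br a l = 0" unfolding lu using extremal_ad_sq[OF a, of u] u(1) by (simp add: g_sym)
  show "g l a = 0" unfolding lu using g_extremal_ad[OF a, of u] by (simp add: g_sym)
  have "g l b = - g a (br b u)"
    unfolding lu using g_invariant[of a u b] br_anticomm[of u b] by simp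
  then show "g l b = 0" using gabu by simp
qed

lemma
  assumes a: "a \<in> E" and b: "b \<in> E" and ab: "g a b = 1" and l: "br a (br b l) = - l"
  shows grading_minus1_intro: "l \<in> grading sm br g a b (-1)"
    and g_ad_grading_minus1: "g a (br b l) = 0"
proof -
  have twice: "z = 0" if "z = 2 * z" for z :: 'k
    using that by (metis add_cancel_right_right mult_2)
  have "br (br a b) a = - sm 2 a"
    using extremal_ad_sq[OF a, of b] ab by (subst br_anticomm) simp
  then have "g (br (br a b) a) (br b l) = - (2 * g a (br b l))" by simp
  moreover have "g a (br b l) = - g (br (br a b) a) (br b l)"
    using l g_invariant[of a b l] g_invariant[of "br a b" a "br b l"] by simp
  ultimately show gabl: "g a (br b l) = 0" by (intro twice) simp
  have "br a l = - br a (br a (br b l))" using l by (metis br_neg_right minus_minus)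
  then have "br a l = 0" using extremal_ad_sq[OF a, of "br b l"] gabl by simp
  then have la: "br l a = 0" by (subst br_anticomm) simp
  have glb: "g l b = 0"
  proof -
    have "br (br b l) b = - sm (2 * g b l) b"
      using extremal_ad_sq[OF b, of l] by (subst br_anticomm) simp
    then have "g a (br (br b l) b) = - (2 * g l b)" using ab by (simp add: g_sym)
    moreover have "g l b = - g a (br (br b l) b)"
      using l g_invariant[of a "br b l" b] by (metis g_neg_left minus_minus)
    ultimately show ?thesis by (intro twice) simp
  qed
  define u where "u = - br b l"
  have "g u a = 0"
    unfolding u_def using la g_invariant[of b l a] by simp
  moreover have "g u b = 0"
    unfolding u_def using g_invariant[of b l b] g_invariant[of b b l] br_anticomm[of l b] by simp
  moreover have "g u (br a b) = 0"
  proof -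
    have "br (br b l) a = l" using l by (subst br_anticomm) simp
    then show ?thesis
      unfolding u_def using glb g_invariant[of "br b l" a b] by simp
  qed
  moreover have "l = br a u" unfolding u_def using l by simp
  ultimately show "l \<in> grading sm br g a b (-1)"
    unfolding grading_def grading_U_def by auto
qed

lemma grading_minus1_iff:
  assumes "a \<in> E" "b \<in> E" "g a b = 1"
  shows "l \<in> grading sm br g a b (-1) \<longleftrightarrow> br a (br b l) = - l"
  using assms grading_minus1_ad_ad grading_minus1_intro by blast

lemma grading_one_eq_minus1_swap: "grading sm br g a b 1 = grading sm br g b a (-1)"
proof -
  have "grading_U br g b a = grading_U br g a b"
    unfolding grading_U_def using br_anticomm[of b a] by auto
  then show ?thesis unfolding grading_def by simp
qed

lemma grading_minus1_br:
  assumes a: "a \<in> E"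
    and l1: "l1 \<in> grading sm br g a b (-1)" and l2: "l2 \<in> grading sm br g a b (-1)"
  shows "br l1 l2 \<in> line_span sm a"
proof -
  obtain u w where "l1 = br a u" "l2 = br a w" "g u a = 0" "g w a = 0"
    using l1 l2 unfolding grading_def grading_U_def by auto
  then have "br l1 l2 = sm (g a (br u w)) a"
    using extremal_br_ad[OF a, of u w] by (simp add: g_sym)
  then show ?thesis unfolding mem_line_span_iff by blast
qed

end

section \<open>The decomposition of \<open>L\<^sub>-\<^sub>1\<close>\<close>

locale minus1_frame = extremal_generated sm br g
  for sm :: "'k::field \<Rightarrow> 'v::ab_group_add \<Rightarrow> 'v" and br g +
  fixes x y c d :: 'v
  assumes x_E: "x \<in> E" and y_E: "y \<in> E" and g_x_y: "g x y = 1"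
    and c_E: "c \<in> E" and c_L: "c \<in> grading sm br g x y (-1)"
    and d_E: "d \<in> E" and d_L: "d \<in> grading sm br g x y (-1)"
    and br_c_d: "br c d = x"
begin

definition q :: 'v where
  "q = - br y d"

abbreviation L :: "'v set" where
  "L \<equiv> grading sm br g x y (-1)"

abbreviation L' :: "int \<Rightarrow> 'v set" where
  "L' i \<equiv> grading sm br g c q i"

lemma L_iff: "l \<in> L \<longleftrightarrow> br x (br y l) = - l"
  by (rule grading_minus1_iff[OF x_E y_E g_x_y])

lemma L_add: "l \<in> L \<Longrightarrow> l' \<in> L \<Longrightarrow> l + l' \<in> L"
  and L_sm: "l \<in> L \<Longrightarrow> sm t l \<in> L"
  and L_diff: "l \<in> L \<Longrightarrow> l' \<in> L \<Longrightarrow> l - l' \<in> L"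
  by (simp_all add: L_iff)

lemma line_span_c_subset_L: "line_span sm c \<subseteq> L"
  and line_span_d_subset_L: "line_span sm d \<subseteq> L"
  using c_L d_L by (auto simp: mem_line_span_iff L_sm)

lemma br_x_y_d: "br x (br y d) = - d"
  using d_L L_iff by blast

lemma br_x_q: "br x q = d"
  using br_x_y_d unfolding q_def by simp

lemma br_y_q: "br y q = 0"
  using extremal_ad_sq[OF y_E, of d] g_grading_minus1_right[OF x_E g_x_y d_L]
  unfolding q_def by (simp add: g_sym)

lemma q_E: "q \<in> E"
proof -
  have "g y d = 0" "g x d = 0"
    using g_grading_minus1_left[OF x_E g_x_y d_L] g_grading_minus1_right[OF x_E g_x_y d_L]
    by (simp_all add: g_sym)
  moreover have "g x q = 0" using g_ad_grading_minus1[OF x_E y_E g_x_y br_x_y_d] q_def by simp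
  moreover have "br x d = 0" using grading_minus1_ad[OF x_E g_x_y d_L] .
  ultimately have "extremal_exp (- 1) x (extremal_exp (- 1) y d) = q"
    unfolding extremal_exp_def using br_x_q q_def by simp
  then show ?thesis using extremal_exp_extremal x_E y_E d_E by metis
qed

lemma g_c_q: "g c q = 1"
  using g_invariant[of c d y] br_anticomm[of d y] br_c_d g_x_y unfolding q_def by simp

lemma L'_minus1_iff: "l \<in> L' (-1) \<longleftrightarrow> br c (br q l) = - l"
  by (rule grading_minus1_iff[OF c_E q_E g_c_q])

lemma L'_one_iff: "l \<in> L' 1 \<longleftrightarrow> br q (br c l) = - l"
  unfolding grading_one_eq_minus1_swap
  by (rule grading_minus1_iff[OF q_E c_E]) (metis g_sym g_c_q)

lemma L'_zero_iff: "l \<in> L' 0 \<longleftrightarrow> br c l \<in> line_span sm c \<and> br q l \<in> line_span sm q"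
  unfolding grading_def by simp

lemma br_q_c_nonzero: "br q c \<noteq> 0"
proof
  assume "br q c = 0"
  then have "br c q = 0" by (subst br_anticomm) simp
  then have "br c (br q d) = - br x q"
    using jacobi_leibniz[of c q d] br_c_d br_anticomm[of q x] by simp
  then have "d \<in> L' (-1)" unfolding L'_minus1_iff br_x_q .
  then have "br c d = 0" by (rule grading_minus1_ad[OF c_E g_c_q])
  then show False using br_c_d extremal_nonzero[OF x_E] by simp
qed

lemma br_q_q_c: "br q (br q c) = q + q"
  using extremal_ad_sq_add[OF q_E, of c] g_c_q by (simp add: g_sym)

lemma g_q_L'_zero:
  assumes j: "j \<in> L' 0"
  shows "g q j = 0"
proof -
  obtain m n where m: "br c j = sm m c" and n: "br q j = sm n q"
    using j unfolding L'_zero_iff mem_line_span_iff by blast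
  have "m = g (br c j) q" using m g_c_q by simp
  also have "\<dots> = - n"
    using g_invariant[of c j q] br_anticomm[of j q] n g_c_q by simp
  finally have "g q (br j c) = n"
    using m br_anticomm[of j c] g_c_q by (simp add: g_sym[of q c])
  then have "sm n q + sm n q = sm n q + sm n q - sm (g q j) (br q c)"
    using extremal_br_ad[OF q_E, of j c] n br_q_q_c g_c_q by (simp add: g_sym)
  then have "sm (g q j) (br q c) = 0" by simp
  then show ?thesis using br_q_c_nonzero sm_eq_zero_iff by blast
qed

lemma L'_minus1_inter_zero:
  assumes z1: "z \<in> L' (-1)" and z0: "z \<in> L' 0"
  shows "z = 0"
proof -
  obtain n where n: "br q z = sm n q" using z0 unfolding L'_zero_iff mem_line_span_iff by blast
  have "z = - br c (br q z)" using z1 unfolding L'_minus1_iff by simp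
  then have z: "z = - sm n (br c q)" using n by simp
  have "br q (br c q) = - (q + q)" using br_q_q_c by (subst br_anticomm[of c]) simp
  then have "sm n q = sm n q + sm n q" using n z by simp
  then have "sm n q = 0" by simp
  then have "br c (sm n q) = 0" by simp
  then show ?thesis using z by simp
qed

lemma br_c_br_y_x: "br c (br y x) = - c"
proof -
  have "br x c = 0" "br x (br y c) = - c"
    using grading_minus1_ad[OF x_E g_x_y c_L] c_L L_iff by blast+
  then have "br c (br x y) = c"
    using jacobi_leibniz[of c x y] br_anticomm[of c x] br_anticomm[of c y] by simp
  then show ?thesis using br_anticomm[of y x] by simp
qed

lemma L_ad_c_ad_q:
  assumes l: "l \<in> L"
  shows "br c (br q l) \<in> L"
proof -
  obtain k where k: "br d l = sm k x"
    using grading_minus1_br[OF x_E d_L l] unfolding mem_line_span_iff by blast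
  have xc: "br x c = 0" and xyc: "br x (br y c) = - c"
    using grading_minus1_ad[OF x_E g_x_y c_L] c_L L_iff by blast+
  have xl: "br x l = 0" and xyl: "br x (br y l) = - l"
    using grading_minus1_ad[OF x_E g_x_y l] l L_iff by blast+
  define m where "m = br q l"
  have ym: "br y m = br q (br y l)"
    unfolding m_def using jacobi_leibniz[of y q l] br_y_q by simp
  have xm: "br x m = sm k x"
    unfolding m_def using jacobi_leibniz[of x q l] br_x_q xl k by simp
  have "br c m = sm k c + br c (br d (br y l))"
  proof -
    have "br (br y d) l = sm k (br y x) - br d (br y l)"
      using jacobi_leibniz[of y d l] k by (simp add: algebra_simps)
    then have "m = - sm k (br y x) + br d (br y l)" unfolding m_def q_def by simp
    then show ?thesis using br_c_br_y_x by simp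
  qed
  moreover have "br x (br (br y c) m) = - br c m + sm k c"
    using jacobi_leibniz[of x "br y c" m] xyc xm br_anticomm[of "br y c" x] by simp
  moreover have "br x (br c (br q (br y l))) = br c (br d (br y l) - m)"
    using jacobi_leibniz[of x c "br q (br y l)"] jacobi_leibniz[of x q "br y l"] xc br_x_q xyl
    unfolding m_def by simp
  moreover have "br y (br c m) = br (br y c) m + br c (br q (br y l))"
    using jacobi_leibniz[of y c m] ym by simp
  ultimately have "br x (br y (br c m)) = - br c m"
    by (simp add: algebra_simps)
  then show ?thesis unfolding m_def L_iff .
qed

lemma L_inter_L'_one: "L \<inter> L' 1 = line_span sm d"
proof
  have qx: "br q x = - d" using br_x_q by (subst br_anticomm) simp
  show "L \<inter> L' 1 \<subseteq> line_span sm d"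
  proof
    fix l assume l: "l \<in> L \<inter> L' 1"
    obtain k where k: "br c l = sm k x"
      using grading_minus1_br[OF x_E c_L] l unfolding mem_line_span_iff by blast
    have "- l = br q (br c l)" using l L'_one_iff by simp
    also have "\<dots> = - sm k d" using k qx by simp
    finally show "l \<in> line_span sm d" unfolding mem_line_span_iff by (metis minus_equation_iff)
  qed
  show "line_span sm d \<subseteq> L \<inter> L' 1"
  proof
    fix z assume z: "z \<in> line_span sm d"
    then obtain t where "z = sm t d" unfolding mem_line_span_iff by blast
    then have "br q (br c z) = - z" using br_c_d qx by simp
    then show "z \<in> L \<inter> L' 1" using z line_span_d_subset_L L'_one_iff by blast
  qed
qed

lemma L'_minus1_diff: "j \<in> L' (-1) \<Longrightarrow> j' \<in> L' (-1) \<Longrightarrow> j - j' \<in> L' (-1)"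
  by (simp add: L'_minus1_iff)

lemma L'_zero_diff: "j \<in> L' 0 \<Longrightarrow> j' \<in> L' 0 \<Longrightarrow> j - j' \<in> L' 0"
  unfolding L'_zero_iff mem_line_span_iff by (metis br_diff_right sm_diff_left)

lemma L_decompose:
  assumes l: "l \<in> L"
  obtains s t j j' where "l = sm s c + j + j' + sm t d" "j \<in> L \<inter> L' (-1)" "j' \<in> L \<inter> L' 0"
proof -
  obtain t where t: "br c l = sm t x"
    using grading_minus1_br[OF x_E c_L l] unfolding mem_line_span_iff by blast
  define s where "s = g (l - sm t d) q"
  \<comment> \<open>\<open>l\<^sub>0\<close> is \<open>l\<close> with its \<open>kc\<close>- and \<open>kd\<close>-components removed\<close>
  define l0 where "l0 = l - sm t d - sm s c"
  have l0_L: "l0 \<in> L" unfolding l0_def using l c_L d_L by (simp add: L_diff L_sm)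
  have c_l0: "br c l0 = 0" unfolding l0_def using t br_c_d by simp
  have q_l0: "g q l0 = 0" unfolding l0_def s_def using g_c_q by (simp add: g_sym)
  have "g c (br q l0) = - g q (br c l0)"
    using g_invariant[of c q l0] g_invariant[of q c l0] br_anticomm[of c q] by simp
  then have g_c_q_l0: "g c (br q l0) = 0" using c_l0 by simp
  define j where "j = - br c (br q l0)"
  have "j \<in> L" unfolding j_def using L_ad_c_ad_q[OF l0_L] L_sm[of _ "- 1"] by simp
  moreover have "j \<in> L' (-1)"
  proof -
    have "br q (br q l0) = 0" using extremal_ad_sq[OF q_E, of l0] q_l0 by simp
    then have "br c (br q (br c (br q l0))) = - br c (br q l0)"
      using extremal_ad_ad[OF c_E, of q "br q l0"] g_c_q_l0 g_c_q by simp
    then show ?thesis unfolding j_def L'_minus1_iff by simp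
  qed
  moreover have "l0 - j \<in> L" using l0_L \<open>j \<in> L\<close> by (rule L_diff)
  moreover have "l0 - j \<in> L' 0"
  proof -
    have "br c (l0 - j) = 0"
      unfolding j_def using c_l0 extremal_ad_sq[OF c_E, of "br q l0"] g_c_q_l0 by simp
    moreover have "br q (l0 - j) = 0"
      unfolding j_def using extremal_ad_ad[OF q_E, of c l0] c_l0 q_l0 g_c_q by (simp add: g_sym)
    ultimately show ?thesis unfolding L'_zero_iff mem_line_span_iff by (metis sm_zero_left)
  qed
  moreover have "l = sm s c + j + (l0 - j) + sm t d" unfolding l0_def by simp
  ultimately show ?thesis using that by blast
qed

lemma components_eq_zero:
  assumes sum: "sm s c + j + j' + sm t d = 0" and j: "j \<in> L' (-1)" and j': "j' \<in> L' 0"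
  shows "s = 0 \<and> j = 0 \<and> j' = 0 \<and> t = 0"
proof -
  obtain m where m: "br c j' = sm m c" using j' unfolding L'_zero_iff mem_line_span_iff by blast
  have "br c j = 0" by (rule grading_minus1_ad[OF c_E g_c_q j])
  then have "sm m c + sm t x = 0" using arg_cong[OF sum, of "br c"] m br_c_d by simp
  then have "g (sm m c + sm t x) y = 0" by simp
  then have t0: "t = 0" using g_grading_minus1_right[OF x_E g_x_y c_L] g_x_y by simp
  have "g j q = 0" by (rule g_grading_minus1_right[OF c_E g_c_q j])
  moreover have "g j' q = 0" using g_q_L'_zero[OF j'] by (simp add: g_sym)
  ultimately have s0: "s = 0" using arg_cong[OF sum, of "\<lambda>v. g v q"] t0 g_c_q by simp
  then have "j' = - j" using sum t0 by (simp add: eq_neg_iff_add_eq_0 add.commute)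
  then have "j' \<in> L' (-1)" using j by (simp add: L'_minus1_iff)
  then have "j' = 0" using L'_minus1_inter_zero j' by blast
  then show ?thesis using sum s0 t0 by simp
qed

lemma L_direct_sum:
  "direct_sum4 L (line_span sm c) (L \<inter> L' (-1)) (L \<inter> L' 0) (line_span sm d)"
  unfolding direct_sum4_def
proof (intro conjI ballI impI)
  let ?sums = "{a + b + e + f |a b e f. a \<in> line_span sm c \<and> b \<in> L \<inter> L' (-1)
      \<and> e \<in> L \<inter> L' 0 \<and> f \<in> line_span sm d}"
  show "L = ?sums"
  proof
    show "L \<subseteq> ?sums"
    proof
      fix l assume "l \<in> L"
      then obtain s t j j' where "l = sm s c + j + j' + sm t d"
        and "j \<in> L \<inter> L' (-1)" "j' \<in> L \<inter> L' 0"
        by (rule L_decompose)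
      moreover have "sm s c \<in> line_span sm c" "sm t d \<in> line_span sm d"
        unfolding mem_line_span_iff by blast+
      ultimately show "l \<in> ?sums" by blast
    qed
    show "?sums \<subseteq> L"
      using line_span_c_subset_L line_span_d_subset_L L_add by blast
  qed
  fix a b e f a' b' e' f'
  assume a: "a \<in> line_span sm c" and a': "a' \<in> line_span sm c"
    and b: "b \<in> L \<inter> L' (-1)" and b': "b' \<in> L \<inter> L' (-1)"
    and e: "e \<in> L \<inter> L' 0" and e': "e' \<in> L \<inter> L' 0"
    and f: "f \<in> line_span sm d" and f': "f' \<in> line_span sm d"
    and eq: "a + b + e + f = a' + b' + e' + f'"
  obtain s s' t t' where st: "a = sm s c" "a' = sm s' c" "f = sm t d" "f' = sm t' d"
    using a a' f f' unfolding mem_line_span_iff by blast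
  have "sm (s - s') c + (b - b') + (e - e') + sm (t - t') d = 0"
    using eq unfolding st by (simp add: algebra_simps)
  moreover have "b - b' \<in> L' (-1)" "e - e' \<in> L' 0"
    using b b' e e' L'_minus1_diff L'_zero_diff by blast+
  ultimately have "s - s' = 0 \<and> b - b' = 0 \<and> e - e' = 0 \<and> t - t' = 0"
    by (rule components_eq_zero)
  then show "a = a'" "b = b'" "e = e'" "f = f'"
    unfolding st by simp_all
qed

end

lemma field_exists_not_0_1:
  assumes "infinite (UNIV :: 'k::field set) \<or> card (UNIV :: 'k set) \<ge> 3"
  shows "\<exists>s::'k. s \<noteq> 0 \<and> s \<noteq> 1"
proof (rule ccontr)
  assume "\<not> ?thesis"
  then have U: "UNIV = {0::'k, 1}" by auto
  have "finite (UNIV :: 'k set)" "card (UNIV :: 'k set) = 2" by (simp_all add: U)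
  then show False using assms by simp
qed

theorem proposition4p6:
  fixes sm :: "'k::field \<Rightarrow> 'v::ab_group_add \<Rightarrow> 'v"
    and br :: "'v \<Rightarrow> 'v \<Rightarrow> 'v"
    and g :: "'v \<Rightarrow> 'v \<Rightarrow> 'k"
    and x y c d :: 'v
  assumes simple: "simple_lie_algebra sm br"
    and field_size: "infinite (UNIV :: 'k set) \<or> card (UNIV :: 'k set) \<ge> 4"
    and generated: "lie_gen sm br {a. pure_extremal sm br a} = UNIV"
    and lines: "has_lines sm br"
    and form: "extremal_form sm br g"
    and xE: "x \<in> extremal_set sm br" and yE: "y \<in> extremal_set sm br"
    and gxy: "g x y = 1"
    and cE: "c \<in> extremal_set sm br \<inter> grading sm br g x y (-1)"
    and dE: "d \<in> extremal_set sm br \<inter> grading sm br g x y (-1)"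
    and cd: "br c d = x"
  shows "direct_sum4 (grading sm br g x y (-1))
           (line_span sm c)
           (grading sm br g x y (-1) \<inter> grading sm br g c (- br y d) (-1))
           (grading sm br g x y (-1) \<inter> grading sm br g c (- br y d) 0)
           (line_span sm d)
         \<and> grading sm br g x y (-1) \<inter> grading sm br g c (- br y d) 1 = line_span sm d"
proof -
  have "\<exists>s::'k. s \<noteq> 0 \<and> s \<noteq> 1"
    using field_size by (intro field_exists_not_0_1) auto
  then interpret minus1_frame sm br g x y c d
    using simple form generated xE yE gxy cE dE cd by unfold_locales auto
  show ?thesis
    using L_direct_sum L_inter_L'_one unfolding q_def by (rule conjI)
qed

end
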